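(* Let $H$ be a separable infinite-dimensional complex Hilbert space. Let $x_1,\dots,x_n\in H$ be vectors of norm $1$, let $R>1$, let $T\in L(H)$ with $\|T\|\le R$, let $x\in H\setminus\{0\}$, $z\in H$ and $\epsilon>0$. Then there exists a finite rank operator $S\in L(H)$ with $\|S\|\le R$ such that $\|(S-T)x_j\|<\epsilon$ for all $j=1,\dots,n$ and $z=S^Nx$ for some natural number $N$ depending only on $R,\epsilon,\|x\|,\|z\|$.
   Context: $L(H)$ denotes the bounded linear operators on $H$. *)

theory Defs
  imports "HOL-Analysis.Analysis"
begin

class complex_hilbert_space = banach +
  fixes scaleC :: "complex \<Rightarrow> 'a \<Rightarrow> 'a"
    and cinner :: "'a \<Rightarrow> 'a \<Rightarrow> complex"
  assumes scaleC_add_right: "scaleC a (x + y) = scaleC a x + scaleC a y"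
    and scaleC_add_left: "scaleC (a + b) x = scaleC a x + scaleC b x"
    and scaleC_scaleC: "scaleC a (scaleC b x) = scaleC (a * b) x"
    and scaleC_one: "scaleC 1 x = x"
    and scaleR_scaleC: "scaleR r x = scaleC (complex_of_real r) x"
    and cinner_commute: "cinner x y = cnj (cinner y x)"
    and cinner_add_right: "cinner x (y + z) = cinner x y + cinner x z"
    and cinner_scaleC_right: "cinner x (scaleC a y) = a * cinner x y"
    and cinner_self_norm: "cinner x x = complex_of_real ((norm x)\<^sup>2)"

definition cspan :: "'a::complex_hilbert_space set \<Rightarrow> 'a set" where
  "cspan B = {\<Sum>b\<in>F. scaleC (c b) b | F c. finite F \<and> F \<subseteq> B}"

definition separable_space :: "'a::topological_space itself \<Rightarrow> bool" where
  "separable_space _ \<longleftrightarrow> (\<exists>D::'a set. countable D \<and> closure D = UNIV)"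

definition infinite_dimensional :: "'a::complex_hilbert_space itself \<Rightarrow> bool" where
  "infinite_dimensional _ \<longleftrightarrow> \<not> (\<exists>B::'a set. finite B \<and> cspan B = UNIV)"

definition bounded_clinear_op :: "('a::complex_hilbert_space \<Rightarrow> 'a) \<Rightarrow> bool" where
  "bounded_clinear_op f \<longleftrightarrow>
     (\<forall>x y. f (x + y) = f x + f y) \<and> (\<forall>a x. f (scaleC a x) = scaleC a (f x)) \<and>
     (\<exists>K. \<forall>x. norm (f x) \<le> norm x * K)"

definition finite_rank :: "('a::complex_hilbert_space \<Rightarrow> 'a) \<Rightarrow> bool" where
  "finite_rank f \<longleftrightarrow> (\<exists>B. finite B \<and> range f \<subseteq> cspan B)"

end

theory Submission
  imports Defs
begin

text \<open>Let \<open>f\<close> be an orthonormal basis of the span of the \<open>x\<^sub>j\<close> and \<open>P\<close> the projection onto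
  it. The compression \<open>(1 - \<delta>) T P\<close>, tilted by \<open>\<delta>R/2\<close> into fresh orthonormal directions \<open>g\<^sub>i\<close>
  (i.e. \<open>f\<^sub>i \<mapsto> (1 - \<delta>) T f\<^sub>i + (\<delta>R/2) g\<^sub>i\<close>), is an operator \<open>S\<^sub>0\<close> of norm at most
  \<open>(1 - \<delta>/2) R\<close> which is within \<open>3\<delta>R/2\<close> of \<open>T\<close> on the \<open>x\<^sub>j\<close>; thanks to the tilt, some vector
  \<open>u\<close> of norm \<open>O(1/\<delta>)\<close> annihilates the range of \<open>S\<^sub>0\<close> while \<open>\<langle>u, x\<rangle> = \<parallel>x\<parallel>\<close>.

  To \<open>S\<^sub>0\<close> we add a weighted chain along another fresh orthonormal family \<open>e\<^sub>0, \<dots>, e\<^sub>k\<close>: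
  \<open>x\<close> enters \<open>e\<^sub>0\<close> through \<open>c \<langle>u, -\<rangle>\<close> with a small weight \<open>c\<close>, each \<open>e\<^sub>i\<close> goes to \<open>R e\<^sub>i\<^sub>+\<^sub>1\<close>,
  and \<open>e\<^sub>k\<close> goes to the correction \<open>w = (z - S\<^sub>0\<^bsup>k+2\<^esup> x) / (c \<parallel>x\<parallel> R\<^sup>k)\<close>, so that
  \<open>S\<^bsup>k+2\<^esup> x = z\<close>. As \<open>S\<^sub>0\<^bsup>k\<^esup> x\<close> decays like \<open>((1 - \<delta>/2) R)\<^sup>k\<close> while the chain amplifies by
  \<open>R\<^sup>k\<close>, the correction is small once \<open>k\<close> is large, and how large depends only on
  \<open>R\<close>, \<open>\<epsilon>\<close>, \<open>\<parallel>x\<parallel>\<close> and \<open>\<parallel>z\<parallel>\<close>. The chain lives on directions that \<open>S\<^sub>0\<close> neither sees nor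
  hits, so the small pieces and \<open>S\<^sub>0\<close> share the norm budget \<open>R\<close> without interference.\<close>

section \<open>Inner product algebra\<close>

lemma cnj_mult_self: "cnj z * z = complex_of_real ((cmod z)\<^sup>2)"
  using complex_norm_square[of z] by (simp add: mult.commute)

context complex_hilbert_space
begin

lemma scaleC_zero_left [simp]: "scaleC 0 x = 0"
proof -
  have "scaleC 0 x = scaleC 0 x + scaleC 0 x" using scaleC_add_left[of 0 0 x] by simp
  thus ?thesis by simp
qed

lemma scaleC_zero_right [simp]: "scaleC a 0 = 0"
proof -
  have "scaleC a 0 = scaleC a 0 + scaleC a 0" using scaleC_add_right[of a 0 0] by simp
  thus ?thesis by simp
qed

lemma scaleC_minus_left: "scaleC (- a) x = - scaleC a x"
  using scaleC_add_left[of a "- a" x] by (simp add: add.inverse_unique)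

lemma scaleC_diff_left: "scaleC (a - b) x = scaleC a x - scaleC b x"
  using scaleC_add_left[of a "- b" x] by (simp add: scaleC_minus_left)

lemma scaleC_sum_right: "scaleC a (sum f A) = (\<Sum>i\<in>A. scaleC a (f i))"
  by (induction A rule: infinite_finite_induct) (auto simp: scaleC_add_right)

lemma cinner_zero_right [simp]: "cinner x 0 = 0"
  using cinner_add_right[of x 0 0] by simp

lemma cinner_diff_right: "cinner x (y - z) = cinner x y - cinner x z"
  using cinner_add_right[of x "y - z" z] by simp

lemma cinner_sum_right: "cinner x (sum f A) = (\<Sum>i\<in>A. cinner x (f i))"
  by (induction A rule: infinite_finite_induct) (auto simp: cinner_add_right)

lemma cinner_add_left: "cinner (x + y) z = cinner x z + cinner y z"
  by (metis cinner_commute cinner_add_right complex_cnj_add)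

lemma cinner_scaleC_left: "cinner (scaleC a x) y = cnj a * cinner x y"
  by (metis cinner_commute cinner_scaleC_right complex_cnj_mult)

lemma cinner_zero_left [simp]: "cinner 0 x = 0"
  by (metis cinner_commute cinner_zero_right complex_cnj_zero)

lemma cinner_sum_left: "cinner (sum f A) x = (\<Sum>i\<in>A. cinner (f i) x)"
  by (induction A rule: infinite_finite_induct) (auto simp: cinner_add_left)

lemma cinner_eq_zero_sym: "cinner x y = 0 \<longleftrightarrow> cinner y x = 0"
  by (metis cinner_commute complex_cnj_zero_iff)

lemma cmod_cinner_commute: "cmod (cinner x y) = cmod (cinner y x)"
  by (subst cinner_commute) simp

lemma cinner_mult_cinner_commute: "cinner y x * cinner x y = complex_of_real ((cmod (cinner x y))\<^sup>2)"
  by (subst cinner_commute[of y x]) (rule cnj_mult_self)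

lemma norm_scaleC: "norm (scaleC a x) = cmod a * norm x"
proof -
  have "complex_of_real ((norm (scaleC a x))\<^sup>2) = cinner (scaleC a x) (scaleC a x)"
    by (simp add: cinner_self_norm)
  also have "\<dots> = (cnj a * a) * cinner x x"
    by (simp add: cinner_scaleC_left cinner_scaleC_right)
  also have "cnj a * a = complex_of_real ((cmod a)\<^sup>2)" by (rule cnj_mult_self)
  also have "cinner x x = complex_of_real ((norm x)\<^sup>2)" by (rule cinner_self_norm)
  finally have "(norm (scaleC a x))\<^sup>2 = (cmod a * norm x)\<^sup>2"
    by (metis of_real_eq_iff of_real_mult power_mult_distrib)
  thus ?thesis by (simp add: power2_eq_iff_nonneg)
qed

lemma norm_add_sq: "(norm (x + y))\<^sup>2 = (norm x)\<^sup>2 + (norm y)\<^sup>2 + 2 * Re (cinner x y)"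
proof -
  have "cinner (x + y) (x + y) = cinner x x + cinner y y + (cinner x y + cnj (cinner x y))"
    by (simp add: cinner_add_left cinner_add_right cinner_commute[of y x] algebra_simps)
  from arg_cong[OF this, of Re] show ?thesis by (simp add: cinner_self_norm)
qed

lemma norm_add_sq_orthogonal: "cinner x y = 0 \<Longrightarrow> (norm (x + y))\<^sup>2 = (norm x)\<^sup>2 + (norm y)\<^sup>2"
  by (simp add: norm_add_sq)

lemma cinner_minus_right: "cinner x (- y) = - cinner x y"
  using cinner_diff_right[of x 0 y] by simp

lemma norm_diff_sq: "(norm (x - y))\<^sup>2 = (norm x)\<^sup>2 + (norm y)\<^sup>2 - 2 * Re (cinner x y)"
  using norm_add_sq[of x "- y"] by (simp add: cinner_minus_right)

lemma cauchy_schwarz: "cmod (cinner x y) \<le> norm x * norm y"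
proof (cases "y = 0")
  case True thus ?thesis by simp
next
  case False
  hence ny: "norm y > 0" by simp
  define a where "a = cinner y x / complex_of_real ((norm y)\<^sup>2)"
  have e1: "a * cinner x y = complex_of_real ((cmod (cinner x y))\<^sup>2 / (norm y)\<^sup>2)"
    unfolding a_def cinner_commute[of y x] by (simp add: cnj_mult_self)
  have e2: "cmod a = cmod (cinner x y) / (norm y)\<^sup>2"
    unfolding a_def cinner_commute[of y x] by (simp add: norm_divide norm_power)
  have "0 \<le> (norm (x - scaleC a y))\<^sup>2" by simp
  also have "\<dots> = (norm x)\<^sup>2 + (cmod a * norm y)\<^sup>2 - 2 * Re (a * cinner x y)"
    by (simp add: norm_diff_sq norm_scaleC cinner_scaleC_right)
  also have "\<dots> = (norm x)\<^sup>2 - (cmod (cinner x y))\<^sup>2 / (norm y)\<^sup>2"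
    unfolding e1 e2 using ny by (simp add: field_simps power2_eq_square)
  finally have "(cmod (cinner x y))\<^sup>2 \<le> (norm x * norm y)\<^sup>2"
    using ny by (simp add: field_simps power_mult_distrib)
  thus ?thesis by (rule power2_le_imp_le) simp
qed

end

section \<open>Orthonormal families\<close>

definition orthonormal :: "(nat \<Rightarrow> 'a::complex_hilbert_space) \<Rightarrow> nat \<Rightarrow> bool" where
  "orthonormal e m \<longleftrightarrow> (\<forall>i<m. \<forall>j<m. cinner (e i) (e j) = (if i = j then 1 else 0))"

definition lincomb :: "(nat \<Rightarrow> 'a::complex_hilbert_space) \<Rightarrow> nat \<Rightarrow> (nat \<Rightarrow> complex) \<Rightarrow> 'a" where
  "lincomb e m a = (\<Sum>i<m. scaleC (a i) (e i))"

definition outer_sum :: "(nat \<Rightarrow> 'a::complex_hilbert_space) \<Rightarrow> (nat \<Rightarrow> 'a) \<Rightarrow> nat \<Rightarrow> 'a \<Rightarrow> 'a" where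
  "outer_sum A B m y = lincomb B m (\<lambda>i. cinner (A i) y)"

abbreviation proj :: "(nat \<Rightarrow> 'a::complex_hilbert_space) \<Rightarrow> nat \<Rightarrow> 'a \<Rightarrow> 'a" where
  "proj e m \<equiv> outer_sum e e m"

lemma cinner_lincomb_right: "cinner v (lincomb e m a) = (\<Sum>i<m. a i * cinner v (e i))"
  by (simp add: lincomb_def cinner_sum_right cinner_scaleC_right)

lemma cinner_lincomb_left: "cinner (lincomb e m a) v = (\<Sum>i<m. cnj (a i) * cinner (e i) v)"
  by (simp add: lincomb_def cinner_sum_left cinner_scaleC_left)

lemma lincomb_Suc: "lincomb e (Suc m) a = lincomb e m a + scaleC (a m) (e m)"
  by (simp add: lincomb_def)

lemma orthonormal_norm:
  assumes "orthonormal e m" "i < m"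
  shows "norm (e i) = 1"
proof -
  have "cinner (e i) (e i) = 1" using assms by (simp add: orthonormal_def)
  hence "complex_of_real ((norm (e i))\<^sup>2) = 1" by (simp only: cinner_self_norm)
  hence "(norm (e i))\<^sup>2 = 1" by (simp only: of_real_eq_1_iff)
  thus ?thesis using norm_ge_zero[of "e i"] by (auto simp: power2_eq_1_iff)
qed

lemma cinner_orthonormal_lincomb:
  assumes "orthonormal e m" "j < m"
  shows "cinner (e j) (lincomb e m a) = a j"
proof -
  have "cinner (e j) (lincomb e m a) = (\<Sum>i<m. if i = j then a i else 0)"
    unfolding cinner_lincomb_right using assms by (intro sum.cong) (auto simp: orthonormal_def)
  also have "\<dots> = a j" using assms(2) by simp
  finally show ?thesis .
qed

lemma norm_orthonormal_lincomb_sq: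
  assumes "orthonormal e m"
  shows "(norm (lincomb e m a))\<^sup>2 = (\<Sum>i<m. (cmod (a i))\<^sup>2)"
proof -
  have "complex_of_real ((norm (lincomb e m a))\<^sup>2) = (\<Sum>i<m. cnj (a i) * a i)"
    unfolding cinner_self_norm[symmetric] cinner_lincomb_left
    using assms by (intro sum.cong) (auto simp: cinner_orthonormal_lincomb)
  also have "\<dots> = complex_of_real (\<Sum>i<m. (cmod (a i))\<^sup>2)"
    by (simp only: of_real_sum cnj_mult_self)
  finally show ?thesis by (simp only: of_real_eq_iff)
qed

lemma cinner_lincomb_eq_zero: "(\<And>i. i < m \<Longrightarrow> cinner v (e i) = 0) \<Longrightarrow> cinner v (lincomb e m a) = 0"
  by (simp add: cinner_lincomb_right)

lemma cinner_proj_residual: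
  assumes "orthonormal e m" "j < m"
  shows "cinner (e j) (y - proj e m y) = 0"
  using assms by (simp add: cinner_diff_right outer_sum_def cinner_orthonormal_lincomb)

lemma cinner_residual_proj:
  assumes "orthonormal e m"
  shows "cinner (y - proj e m y) (proj e m z) = 0"
  unfolding outer_sum_def[of e e m z]
  by (rule cinner_lincomb_eq_zero) (use cinner_proj_residual[OF assms] cinner_eq_zero_sym in blast)

lemma cinner_orthogonal_residual:
  "(\<And>i. i < m \<Longrightarrow> cinner u (e i) = 0) \<Longrightarrow> cinner u (y - proj e m y) = cinner u y"
  by (simp add: cinner_diff_right outer_sum_def cinner_lincomb_eq_zero)

lemma norm_add_orthonormal_lincomb_sq:
  assumes "orthonormal g m" "\<And>i. i < m \<Longrightarrow> cinner x (g i) = 0"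
  shows "(norm (x + lincomb g m a))\<^sup>2 = (norm x)\<^sup>2 + (\<Sum>i<m. (cmod (a i))\<^sup>2)"
proof -
  have "cinner x (lincomb g m a) = 0" by (rule cinner_lincomb_eq_zero) (rule assms(2))
  thus ?thesis by (simp add: norm_add_sq_orthogonal norm_orthonormal_lincomb_sq[OF assms(1)])
qed

lemma bessel_eq:
  assumes "orthonormal e m"
  shows "(norm y)\<^sup>2 = (norm (y - proj e m y))\<^sup>2 + (\<Sum>i<m. (cmod (cinner (e i) y))\<^sup>2)"
proof -
  have "(norm y)\<^sup>2 = (norm ((y - proj e m y) + proj e m y))\<^sup>2" by simp
  also have "\<dots> = (norm (y - proj e m y))\<^sup>2 + (norm (proj e m y))\<^sup>2"
    by (rule norm_add_sq_orthogonal[OF cinner_residual_proj[OF assms]])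
  finally show ?thesis by (simp add: outer_sum_def norm_orthonormal_lincomb_sq[OF assms])
qed

lemma bessel_inequality:
  "orthonormal e m \<Longrightarrow> (\<Sum>i<m. (cmod (cinner (e i) y))\<^sup>2) \<le> (norm y)\<^sup>2"
  using bessel_eq[of e m y] by simp

lemma norm_outer_sum_orthonormal_le:
  assumes "orthonormal f m" "orthonormal g m"
  shows "norm (outer_sum f g m y) \<le> norm y"
proof (rule power2_le_imp_le)
  show "(norm (outer_sum f g m y))\<^sup>2 \<le> (norm y)\<^sup>2"
    unfolding outer_sum_def norm_orthonormal_lincomb_sq[OF assms(2)]
    by (rule bessel_inequality[OF assms(1)])
qed simp

lemma orthonormal_extend:
  assumes e: "orthonormal e m" and r: "r \<noteq> 0" "\<And>i. i < m \<Longrightarrow> cinner (e i) r = 0"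
  shows "orthonormal (e(m := scaleC (complex_of_real (1 / norm r)) r)) (Suc m)"
proof -
  define f where "f = scaleC (complex_of_real (1 / norm r)) r"
  have ef: "cinner (e i) f = 0 \<and> cinner f (e i) = 0" if "i < m" for i
  proof -
    have "cinner r (e i) = 0" using r(2)[OF that] cinner_eq_zero_sym by blast
    thus ?thesis using r(2)[OF that] by (simp add: f_def cinner_scaleC_left cinner_scaleC_right)
  qed
  have "norm f = 1" using r(1) by (simp add: f_def norm_scaleC norm_divide)
  hence "cinner f f = 1" by (simp add: cinner_self_norm)
  with e ef show ?thesis
    unfolding f_def[symmetric] orthonormal_def by (auto simp: less_Suc_eq)
qed

lemma gram_schmidt:
  fixes V :: "'a::complex_hilbert_space set"
  assumes "finite V"
  shows "\<exists>e m. orthonormal e m \<and> (\<forall>v\<in>V. proj e m v = v)"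
  using assms
proof (induction rule: finite_induct)
  case empty
  show ?case by (intro exI[of _ "\<lambda>_. 0"] exI[of _ 0]) (simp add: orthonormal_def outer_sum_def lincomb_def)
next
  case (insert v V)
  then obtain e m where e: "orthonormal e m" and fix_V: "\<forall>w\<in>V. proj e m w = w" by blast
  define r where "r = v - proj e m v"
  show ?case
  proof (cases "r = 0")
    case True
    hence "proj e m v = v" unfolding r_def by (metis right_minus_eq)
    with e fix_V show ?thesis by blast
  next
    case False
    define f where "f = scaleC (complex_of_real (1 / norm r)) r"
    have r_e: "cinner (e i) r = 0" if "i < m" for i
      unfolding r_def by (rule cinner_proj_residual[OF e that])
    have e': "orthonormal (e(m := f)) (Suc m)"
      unfolding f_def by (rule orthonormal_extend[OF e False r_e])
    have proj': "proj (e(m := f)) (Suc m) w = proj e m w + scaleC (cinner f w) f" for w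
      by (simp add: outer_sum_def lincomb_Suc lincomb_def)
    have "cinner f (proj e m w) = 0" for w
      unfolding outer_sum_def
      by (rule cinner_lincomb_eq_zero) (use r_e cinner_eq_zero_sym in \<open>auto simp: f_def cinner_scaleC_left\<close>)
    hence fix_V': "proj (e(m := f)) (Suc m) w = w" if "w \<in> V" for w
      using fix_V that proj' by (metis add.right_neutral scaleC_zero_left)
    have r_proj: "cinner r (proj e m v) = 0"
      unfolding r_def by (rule cinner_residual_proj[OF e])
    have "cinner r v = cinner r (r + proj e m v)" by (simp add: r_def)
    also have "\<dots> = complex_of_real ((norm r)\<^sup>2)"
      by (simp only: cinner_add_right r_proj cinner_self_norm add_0_right)
    finally have "scaleC (cinner f v) f = r"
      using False by (simp add: f_def cinner_scaleC_left scaleC_scaleC power2_eq_square scaleC_one)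
    hence "proj (e(m := f)) (Suc m) v = v" by (simp add: proj' r_def)
    with e' fix_V' show ?thesis by blast
  qed
qed

lemma cspan_zero: "0 \<in> cspan B"
  unfolding cspan_def by (rule CollectI, rule exI[of _ "{}"]) auto

lemma cspan_base: "b \<in> B \<Longrightarrow> b \<in> cspan B"
  unfolding cspan_def
  by (rule CollectI, rule exI[of _ "{b}"], rule exI[of _ "\<lambda>_. 1"]) (auto simp: scaleC_one)

lemma cspan_mono: "B \<subseteq> B' \<Longrightarrow> cspan B \<subseteq> cspan B'"
  unfolding cspan_def by blast

lemma cspan_add:
  assumes "x \<in> cspan B" "y \<in> cspan B"
  shows "x + y \<in> cspan B"
proof -
  obtain F1 c1 F2 c2 where x: "x = (\<Sum>b\<in>F1. scaleC (c1 b) b)" "finite F1" "F1 \<subseteq> B"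
    and y: "y = (\<Sum>b\<in>F2. scaleC (c2 b) b)" "finite F2" "F2 \<subseteq> B"
    using assms unfolding cspan_def by blast
  define c where "c b = (if b \<in> F1 then c1 b else 0) + (if b \<in> F2 then c2 b else 0)" for b
  have "(\<Sum>b\<in>F1 \<union> F2. scaleC (if b \<in> F1 then c1 b else 0) b) = x"
    unfolding x(1) using x(2) y(2)
    by (intro sum.mono_neutral_cong_right) auto
  moreover have "(\<Sum>b\<in>F1 \<union> F2. scaleC (if b \<in> F2 then c2 b else 0) b) = y"
    unfolding y(1) using x(2) y(2)
    by (intro sum.mono_neutral_cong_right) auto
  ultimately have "x + y = (\<Sum>b\<in>F1 \<union> F2. scaleC (c b) b)"
    by (simp add: c_def scaleC_add_left sum.distrib)
  thus ?thesis unfolding cspan_def using x y by blast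
qed

lemma cspan_scaleC: "x \<in> cspan B \<Longrightarrow> scaleC a x \<in> cspan B"
  unfolding cspan_def
  by (auto simp: scaleC_sum_right scaleC_scaleC intro!: exI[of _ "\<lambda>b. a * _ b"])

lemma lincomb_in_cspan: "(\<And>i. i < m \<Longrightarrow> e i \<in> B) \<Longrightarrow> lincomb e m a \<in> cspan B"
  by (induction m) (simp_all add: lincomb_def cspan_zero cspan_add cspan_scaleC cspan_base)

lemma exists_orthogonal_unit_vector:
  fixes V :: "'a::complex_hilbert_space set"
  assumes "infinite_dimensional TYPE('a)" "finite V"
  shows "\<exists>f. norm f = 1 \<and> (\<forall>v\<in>V. cinner f v = 0)"
proof -
  obtain e m where e: "orthonormal e m" and fix_V: "\<forall>v\<in>V. proj e m v = v"
    using gram_schmidt[OF assms(2)] by blast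
  have "cspan (e ` {..<m}) \<noteq> UNIV"
    using assms(1) finite_imageI[OF finite_lessThan] unfolding infinite_dimensional_def by blast
  then obtain v where v: "v \<notin> cspan (e ` {..<m})" by blast
  define r where "r = v - proj e m v"
  have "proj e m v \<in> cspan (e ` {..<m})" unfolding outer_sum_def by (rule lincomb_in_cspan) auto
  hence "r \<noteq> 0" using v by (auto simp: r_def)
  moreover have r_e: "cinner (e i) r = 0" if "i < m" for i
    unfolding r_def by (rule cinner_proj_residual[OF e that])
  ultimately have extended: "orthonormal (e(m := scaleC (complex_of_real (1 / norm r)) r)) (Suc m)"
    by (rule orthonormal_extend[OF e])
  define f where "f = scaleC (complex_of_real (1 / norm r)) r"
  have "cinner f (e i) = 0" if "i < m" for i
    using r_e[OF that] cinner_eq_zero_sym by (auto simp: f_def cinner_scaleC_left)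
  hence "cinner f (proj e m w) = 0" for w
    unfolding outer_sum_def by (rule cinner_lincomb_eq_zero)
  moreover have "norm f = 1"
    using orthonormal_norm[OF extended, of m] by (simp add: f_def)
  moreover have "cinner f v = cinner f (proj e m v)" if "v \<in> V" for v
    using fix_V that by simp
  ultimately show ?thesis by auto
qed

lemma exists_orthogonal_orthonormal:
  fixes V :: "'a::complex_hilbert_space set"
  assumes "infinite_dimensional TYPE('a)" "finite V"
  shows "\<exists>g. orthonormal g k \<and> (\<forall>i<k. \<forall>v\<in>V. cinner (g i) v = 0)"
proof (induction k)
  case 0 show ?case by (simp add: orthonormal_def)
next
  case (Suc k)
  then obtain g where g: "orthonormal g k" and g_V: "\<forall>i<k. \<forall>v\<in>V. cinner (g i) v = 0" by blast
  obtain f where f: "norm f = 1" "\<forall>v\<in>V \<union> g ` {..<k}. cinner f v = 0"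
    using exists_orthogonal_unit_vector[OF assms(1), of "V \<union> g ` {..<k}"] assms(2) by auto
  have "cinner (g i) f = 0" if "i < k" for i
    using f(2) that cinner_eq_zero_sym by blast
  moreover have "cinner f f = 1" using f(1) by (simp add: cinner_self_norm)
  ultimately have "orthonormal (g(k := f)) (Suc k)"
    using g f(2) unfolding orthonormal_def by (auto simp: less_Suc_eq)
  moreover have "\<forall>i<Suc k. \<forall>v\<in>V. cinner ((g(k := f)) i) v = 0"
    using g_V f(2) by (auto simp: less_Suc_eq)
  ultimately show ?case by blast
qed

section \<open>Bounded and finite-rank operators\<close>

lemma bounded_clinear_op_additive: "bounded_clinear_op T \<Longrightarrow> T (x + y) = T x + T y"
  by (simp add: bounded_clinear_op_def)

lemma bounded_clinear_op_scaleC: "bounded_clinear_op T \<Longrightarrow> T (scaleC a x) = scaleC a (T x)"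
  by (simp add: bounded_clinear_op_def)

lemma bounded_clinear_op_zero: "bounded_clinear_op T \<Longrightarrow> T 0 = 0"
  using bounded_clinear_op_additive[of T 0 0] by simp

lemma bounded_clinear_op_lincomb:
  "bounded_clinear_op T \<Longrightarrow> T (lincomb e m a) = lincomb (\<lambda>i. T (e i)) m a"
  by (induction m)
    (simp_all add: lincomb_def bounded_clinear_op_zero bounded_clinear_op_additive bounded_clinear_op_scaleC)

lemma bounded_clinear_op_residual:
  assumes "bounded_clinear_op S" "\<And>i. i < m \<Longrightarrow> S (e i) = 0"
  shows "S (y - proj e m y) = S y"
proof -
  have "S (proj e m y) = 0"
    unfolding outer_sum_def bounded_clinear_op_lincomb[OF assms(1)] unfolding lincomb_def
    by (intro sum.neutral) (simp add: assms(2))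
  thus ?thesis using bounded_clinear_op_additive[OF assms(1), of "y - proj e m y" "proj e m y"] by simp
qed

lemma bounded_clinear_op_plus:
  assumes "bounded_clinear_op f" "bounded_clinear_op g"
  shows "bounded_clinear_op (\<lambda>y. f y + g y)"
proof -
  obtain K1 K2 where K: "\<And>x. norm (f x) \<le> norm x * K1" "\<And>x. norm (g x) \<le> norm x * K2"
    using assms unfolding bounded_clinear_op_def by blast
  have "norm (f x + g x) \<le> norm x * (K1 + K2)" for x
  proof -
    have "norm (f x + g x) \<le> norm (f x) + norm (g x)" by (rule norm_triangle_ineq)
    also have "\<dots> \<le> norm x * (K1 + K2)" using K[of x] by (simp add: distrib_left)
    finally show ?thesis .
  qed
  thus ?thesis
    using assms unfolding bounded_clinear_op_def
    by (intro conjI allI exI[of _ "K1 + K2"]) (auto simp: scaleC_add_right algebra_simps)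
qed

lemma bounded_clinear_op_imp_bounded_linear:
  assumes "bounded_clinear_op T"
  shows "bounded_linear T"
proof -
  obtain K where "\<And>x. norm (T x) \<le> norm x * K"
    using assms unfolding bounded_clinear_op_def by blast
  thus ?thesis
    using assms by (intro bounded_linear_intro)
      (auto simp: scaleR_scaleC bounded_clinear_op_additive bounded_clinear_op_scaleC)
qed

lemma bounded_clinear_op_norm_le:
  assumes "bounded_clinear_op T" "onorm T \<le> R"
  shows "norm (T y) \<le> R * norm y"
  using onorm[OF bounded_clinear_op_imp_bounded_linear[OF assms(1)], of y] assms(2)
  by (meson mult_right_mono norm_ge_zero order_trans)

lemma bounded_clinear_op_outer_sum: "bounded_clinear_op (outer_sum A B m)"
  unfolding bounded_clinear_op_def
proof (intro conjI allI exI)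
  fix x y a
  show "outer_sum A B m (x + y) = outer_sum A B m x + outer_sum A B m y"
    by (simp add: outer_sum_def lincomb_def cinner_add_right scaleC_add_left sum.distrib)
  show "outer_sum A B m (scaleC a x) = scaleC a (outer_sum A B m x)"
    by (simp add: outer_sum_def lincomb_def cinner_scaleC_right scaleC_sum_right scaleC_scaleC)
  have "norm (outer_sum A B m x) \<le> (\<Sum>i<m. norm (scaleC (cinner (A i) x) (B i)))"
    unfolding outer_sum_def lincomb_def by (rule norm_sum)
  also have "\<dots> \<le> (\<Sum>i<m. norm x * (norm (A i) * norm (B i)))"
  proof (rule sum_mono)
    fix i
    have "cmod (cinner (A i) x) * norm (B i) \<le> (norm (A i) * norm x) * norm (B i)"
      by (rule mult_right_mono[OF cauchy_schwarz norm_ge_zero])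
    thus "norm (scaleC (cinner (A i) x) (B i)) \<le> norm x * (norm (A i) * norm (B i))"
      by (simp add: norm_scaleC algebra_simps)
  qed
  finally show "norm (outer_sum A B m x) \<le> norm x * (\<Sum>i<m. norm (A i) * norm (B i))"
    by (simp add: sum_distrib_left)
qed

lemma finite_rank_outer_sum: "finite_rank (outer_sum A B m)"
  unfolding finite_rank_def outer_sum_def
  by (intro exI[of _ "B ` {..<m}"]) (auto intro: lincomb_in_cspan)

lemma finite_rank_plus:
  assumes "finite_rank f" "finite_rank g"
  shows "finite_rank (\<lambda>y. f y + g y)"
proof -
  obtain B1 B2 where B: "finite B1" "range f \<subseteq> cspan B1" "finite B2" "range g \<subseteq> cspan B2"
    using assms unfolding finite_rank_def by blast
  have "range (\<lambda>y. f y + g y) \<subseteq> cspan (B1 \<union> B2)"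
    using B cspan_mono[of B1 "B1 \<union> B2"] cspan_mono[of B2 "B1 \<union> B2"] by (auto intro!: cspan_add)
  thus ?thesis using B unfolding finite_rank_def by blast
qed

lemma norm_funpow_le:
  fixes F :: "'a::real_normed_vector \<Rightarrow> 'a"
  assumes "\<And>y. norm (F y) \<le> L * norm y" "0 \<le> L"
  shows "norm ((F ^^ i) y) \<le> L ^ i * norm y"
proof (induction i)
  case (Suc i)
  have "norm ((F ^^ Suc i) y) \<le> L * norm ((F ^^ i) y)" using assms(1) by simp
  also have "\<dots> \<le> L * (L ^ i * norm y)" using Suc assms(2) by (rule mult_left_mono)
  finally show ?case by (simp add: mult.assoc)
qed simp

text \<open>Bessel's inequality for the adjoint: the sum is \<open>\<Sum>i. |\<langle>T\<^sup>* v, f i\<rangle>|\<^sup>2\<close>.\<close>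
lemma bessel_adjoint:
  assumes T: "bounded_clinear_op T" "\<And>y. norm (T y) \<le> R * norm y" and f: "orthonormal f m"
  shows "(\<Sum>i<m. (cmod (cinner v (T (f i))))\<^sup>2) \<le> (R * norm v)\<^sup>2"
proof -
  define s where "s = (\<Sum>i<m. (cmod (cinner v (T (f i))))\<^sup>2)"
  define w where "w = lincomb f m (\<lambda>i. cinner (T (f i)) v)"
  have s: "0 \<le> s" by (simp add: s_def sum_nonneg)
  have "(norm w)\<^sup>2 = s"
    unfolding w_def s_def norm_orthonormal_lincomb_sq[OF f] by (simp add: cmod_cinner_commute)
  hence w: "norm w = sqrt s" by (metis norm_ge_zero real_sqrt_unique)
  have "complex_of_real s = cinner v (T w)"
    by (simp add: s_def w_def bounded_clinear_op_lincomb[OF T(1)] cinner_lincomb_right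
        cinner_mult_cinner_commute)
  hence "s \<le> norm v * norm (T w)"
    using cauchy_schwarz[of v "T w"] s by (metis norm_of_real abs_of_nonneg)
  also have "\<dots> \<le> R * norm v * sqrt s"
    using mult_left_mono[OF T(2)[of w] norm_ge_zero[of v]] w by (simp add: algebra_simps)
  finally have le: "sqrt s * sqrt s \<le> R * norm v * sqrt s" using s by simp
  show ?thesis
  proof (cases "s = 0")
    case True
    thus ?thesis by (simp add: s_def[symmetric])
  next
    case False
    hence "0 < sqrt s" using s by simp
    with le have "sqrt s \<le> R * norm v" by (rule mult_right_le_imp_le)
    hence "(sqrt s)\<^sup>2 \<le> (R * norm v)\<^sup>2" using \<open>0 < sqrt s\<close> by (intro power_mono) simp_all
    thus ?thesis using s unfolding s_def[symmetric] by simp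
  qed
qed

section \<open>Elementary estimates\<close>

lemma norm_diff_le_shrunk:
  fixes a b t :: "'a::complex_hilbert_space"
  assumes "0 \<le> \<delta>"
  shows "norm (a - t) \<le> norm (a - b) + norm (b - scaleC (complex_of_real (1 - \<delta>)) t) + \<delta> * norm t"
proof -
  let ?p = "a - b" and ?q = "b - scaleC (complex_of_real (1 - \<delta>)) t"
  have "a - t = (?p + ?q) - scaleC (complex_of_real \<delta>) t" by (simp add: scaleC_diff_left scaleC_one)
  hence "norm (a - t) \<le> norm (?p + ?q) + norm (scaleC (complex_of_real \<delta>) t)"
    by (simp only: norm_triangle_ineq4)
  also have "\<dots> \<le> norm ?p + norm ?q + \<delta> * norm t"
    using norm_triangle_ineq[of ?p ?q] assms by (simp add: norm_scaleC)
  finally show ?thesis .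
qed

lemma chain_budget_inequality:
  fixes P h R s \<beta> B :: real
  assumes "0 \<le> P" "0 \<le> h" "P\<^sup>2 + P * h + h\<^sup>2 \<le> R\<^sup>2" "0 \<le> B"
  shows "(P * s + h * \<beta>)\<^sup>2 + h\<^sup>2 * s\<^sup>2 + R\<^sup>2 * B \<le> R\<^sup>2 * (s\<^sup>2 + B + \<beta>\<^sup>2)"
proof -
  have "(P * s + h * \<beta>)\<^sup>2 + h\<^sup>2 * s\<^sup>2 + P * h * (s - \<beta>)\<^sup>2
      = (P\<^sup>2 + P * h + h\<^sup>2) * s\<^sup>2 + (P * h + h\<^sup>2) * \<beta>\<^sup>2"
    by (simp add: power2_eq_square algebra_simps)
  moreover have "0 \<le> P * h * (s - \<beta>)\<^sup>2" using assms by simp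
  moreover have "(P\<^sup>2 + P * h + h\<^sup>2) * s\<^sup>2 \<le> R\<^sup>2 * s\<^sup>2" using assms by (simp add: mult_right_mono)
  moreover have "P * h + h\<^sup>2 \<le> R\<^sup>2" using assms(3) zero_le_power2[of P] by linarith
  hence "(P * h + h\<^sup>2) * \<beta>\<^sup>2 \<le> R\<^sup>2 * \<beta>\<^sup>2" by (rule mult_right_mono) simp
  ultimately show ?thesis by (simp add: algebra_simps)
qed

lemma exists_power_le:
  fixes P R K a b :: real
  assumes "0 \<le> P" "P < R" "1 < R" "0 < K"
  shows "\<exists>k. b + P ^ Suc (Suc k) * a \<le> K * R ^ k"
proof -
  have "(\<lambda>k. b * inverse R ^ k + P\<^sup>2 * a * (P / R) ^ k) \<longlonglongrightarrow> b * 0 + P\<^sup>2 * a * 0"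
    using assms
    by (intro tendsto_add tendsto_mult tendsto_const LIMSEQ_power_zero)
      (auto simp: inverse_less_1_iff abs_divide divide_less_eq)
  from order_tendstoD(2)[OF this] assms(4)
  obtain k where "b * inverse R ^ k + P\<^sup>2 * a * (P / R) ^ k < K"
    by (auto simp: eventually_sequentially)
  hence "(b * inverse R ^ k + P\<^sup>2 * a * (P / R) ^ k) * R ^ k < K * R ^ k"
    using assms by (intro mult_strict_right_mono) auto
  moreover have "(b * inverse R ^ k + P\<^sup>2 * a * (P / R) ^ k) * R ^ k = b + P ^ Suc (Suc k) * a"
    using assms by (simp add: field_simps power_divide power_inverse power2_eq_square)
  ultimately show ?thesis by (intro exI[of _ k]) simp
qed

section \<open>The weighted chain\<close>

definition chain_extension ::
    "('a \<Rightarrow> 'a) \<Rightarrow> 'a \<Rightarrow> real \<Rightarrow> real \<Rightarrow> (nat \<Rightarrow> 'a) \<Rightarrow> nat \<Rightarrow> 'a \<Rightarrow> 'a \<Rightarrow> 'a::complex_hilbert_space"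
  where "chain_extension S0 u c R e k w y =
    S0 y + outer_sum (\<lambda>_. u) (\<lambda>_. scaleC (complex_of_real c) (e 0)) 1 y
      + outer_sum e (\<lambda>i. scaleC (complex_of_real R) (e (Suc i))) k y
      + outer_sum (\<lambda>_. e k) (\<lambda>_. w) 1 y"

lemma bounded_clinear_op_chain_extension:
  assumes "bounded_clinear_op S0"
  shows "bounded_clinear_op (chain_extension S0 u c R e k w)"
  unfolding chain_extension_def[abs_def]
  by (intro bounded_clinear_op_plus bounded_clinear_op_outer_sum assms)

lemma finite_rank_chain_extension:
  assumes "finite_rank S0"
  shows "finite_rank (chain_extension S0 u c R e k w)"
  unfolding chain_extension_def[abs_def]
  by (intro finite_rank_plus finite_rank_outer_sum assms)

lemma chain_extension_decompose:
  "chain_extension S0 u c R e k w y = (S0 y + scaleC (cinner (e k) y) w)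
     + lincomb e (Suc k) (\<lambda>i. case i of 0 \<Rightarrow> complex_of_real c * cinner u y
                                     | Suc l \<Rightarrow> complex_of_real R * cinner (e l) y)"
  unfolding lincomb_def[of e "Suc k"] sum.lessThan_Suc_shift
  by (simp add: chain_extension_def outer_sum_def lincomb_def scaleC_scaleC mult.commute add_ac)

lemma chain_extension_orthogonal:
  assumes "\<And>i. i < Suc k \<Longrightarrow> cinner (e i) v = 0"
  shows "chain_extension S0 u c R e k w v = S0 v + scaleC (complex_of_real c * cinner u v) (e 0)"
proof -
  have "outer_sum e (\<lambda>i. scaleC (complex_of_real R) (e (Suc i))) k v = 0"
    unfolding outer_sum_def lincomb_def using assms by (intro sum.neutral) auto
  thus ?thesis
    using assms[of k] by (simp add: chain_extension_def outer_sum_def lincomb_def scaleC_scaleC mult.commute)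
qed

lemma norm_chain_extension_diff_le:
  assumes "orthonormal e (Suc k)" "0 \<le> c" "\<And>i. i < Suc k \<Longrightarrow> cinner (e i) v = 0"
  shows "norm (chain_extension S0 u c R e k w v - S0 v) \<le> c * norm u * norm v"
proof -
  have "norm (chain_extension S0 u c R e k w v - S0 v) = c * cmod (cinner u v)"
    using chain_extension_orthogonal[OF assms(3)] orthonormal_norm[OF assms(1), of 0] assms(2)
    by (simp add: norm_scaleC norm_mult)
  also have "\<dots> \<le> c * (norm u * norm v)" using cauchy_schwarz assms(2) by (rule mult_left_mono)
  finally show ?thesis by (simp add: mult.assoc)
qed

lemma norm_chain_coefficients_sq:
  assumes "orthonormal e (Suc k)"
  shows "(norm (lincomb e (Suc k) (\<lambda>i. case i of 0 \<Rightarrow> complex_of_real c * a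
      | Suc l \<Rightarrow> complex_of_real R * cinner (e l) y)))\<^sup>2
    = (c * cmod a)\<^sup>2 + R\<^sup>2 * (\<Sum>i<k. (cmod (cinner (e i) y))\<^sup>2)"
  unfolding norm_orthonormal_lincomb_sq[OF assms] sum.lessThan_Suc_shift
  by (simp add: norm_mult power_mult_distrib sum_distrib_left)

lemma chain_extension_basis:
  assumes e: "orthonormal e (Suc k)" and "\<And>i. i < Suc k \<Longrightarrow> S0 (e i) = 0"
    and "\<And>i. i < Suc k \<Longrightarrow> cinner u (e i) = 0" and i: "i < Suc k"
  shows "chain_extension S0 u c R e k w (e i) =
    (if i < k then scaleC (complex_of_real R) (e (Suc i)) else w)"
proof -
  have ee: "cinner (e l) (e i) = (if l = i then 1 else 0)" if "l < Suc k" for l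
    using e i that by (simp add: orthonormal_def)
  have "outer_sum e (\<lambda>i. scaleC (complex_of_real R) (e (Suc i))) k (e i)
      = (\<Sum>l<k. if l = i then scaleC (complex_of_real R) (e (Suc i)) else 0)"
    unfolding outer_sum_def lincomb_def by (intro sum.cong refl) (simp add: ee scaleC_one)
  also have "\<dots> = (if i < k then scaleC (complex_of_real R) (e (Suc i)) else 0)" by simp
  finally show ?thesis
    using assms(2-4) ee[of k] by (auto simp: chain_extension_def outer_sum_def lincomb_def scaleC_one)
qed

lemma chain_extension_orbit:
  assumes e: "orthonormal e (Suc k)" and S0: "bounded_clinear_op S0"
    and S0_e: "\<And>i. i < Suc k \<Longrightarrow> S0 (e i) = 0"
    and e_S0: "\<And>i y. i < Suc k \<Longrightarrow> cinner (e i) (S0 y) = 0"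
    and u_S0: "\<And>y. cinner u (S0 y) = 0"
    and u_e: "\<And>i. i < Suc k \<Longrightarrow> cinner u (e i) = 0"
    and e_x: "\<And>i. i < Suc k \<Longrightarrow> cinner (e i) x = 0"
  shows "(chain_extension S0 u c R e k w ^^ Suc (Suc k)) x
    = (S0 ^^ Suc (Suc k)) x + scaleC (complex_of_real (c * R ^ k) * cinner u x) w"
proof -
  let ?S = "chain_extension S0 u c R e k w"
  have S: "bounded_clinear_op ?S" by (rule bounded_clinear_op_chain_extension[OF S0])
  have S_S0: "?S (S0 y) = S0 (S0 y)" for y
    using chain_extension_orthogonal[of k e "S0 y"] e_S0 u_S0 by simp
  have S_e: "?S (e i) = (if i < k then scaleC (complex_of_real R) (e (Suc i)) else w)" if "i < Suc k" for i
    by (rule chain_extension_basis[OF e]) (simp_all add: S0_e u_e that)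
  have orbit: "(?S ^^ Suc i) x = (S0 ^^ Suc i) x + scaleC (complex_of_real (c * R ^ i) * cinner u x) (e i)"
    if "i \<le> k" for i
    using that
  proof (induction i)
    case 0
    show ?case using chain_extension_orthogonal[of k e x] e_x by simp
  next
    case (Suc i)
    hence "(?S ^^ Suc (Suc i)) x
        = ?S ((S0 ^^ Suc i) x) + scaleC (complex_of_real (c * R ^ i) * cinner u x) (?S (e i))"
      by (simp add: bounded_clinear_op_additive[OF S] bounded_clinear_op_scaleC[OF S])
    also have "?S ((S0 ^^ Suc i) x) = (S0 ^^ Suc (Suc i)) x" using S_S0 by simp
    also have "?S (e i) = scaleC (complex_of_real R) (e (Suc i))" using S_e[of i] Suc.prems by simp
    finally show ?case by (simp add: scaleC_scaleC mult_ac)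
  qed
  have "(?S ^^ Suc (Suc k)) x
      = ?S ((S0 ^^ Suc k) x) + scaleC (complex_of_real (c * R ^ k) * cinner u x) (?S (e k))"
    using orbit[of k] by (simp add: bounded_clinear_op_additive[OF S] bounded_clinear_op_scaleC[OF S])
  also have "?S ((S0 ^^ Suc k) x) = (S0 ^^ Suc (Suc k)) x" using S_S0 by simp
  also have "?S (e k) = w" using S_e[of k] by simp
  finally show ?thesis .
qed

lemma norm_chain_extension_le:
  assumes e: "orthonormal e (Suc k)" and S0: "bounded_clinear_op S0" "\<And>y. norm (S0 y) \<le> P * norm y"
    and S0_e: "\<And>i. i < Suc k \<Longrightarrow> S0 (e i) = 0"
    and e_S0: "\<And>i y. i < Suc k \<Longrightarrow> cinner (e i) (S0 y) = 0"
    and u_e: "\<And>i. i < Suc k \<Longrightarrow> cinner u (e i) = 0"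
    and e_w: "\<And>i. i < Suc k \<Longrightarrow> cinner (e i) w = 0"
    and budget: "0 \<le> c" "c * norm u \<le> h" "norm w \<le> h" "0 \<le> P" "0 \<le> h"
      "P\<^sup>2 + P * h + h\<^sup>2 \<le> R\<^sup>2" "0 \<le> R"
  shows "norm (chain_extension S0 u c R e k w y) \<le> R * norm y"
proof -
  define y' where "y' = y - proj e (Suc k) y"
  define B where "B = (\<Sum>i<k. (cmod (cinner (e i) y))\<^sup>2)"
  define \<beta> where "\<beta> = cmod (cinner (e k) y)"
  define coef where "coef = (\<lambda>i. case i of 0 \<Rightarrow> complex_of_real c * cinner u y
    | Suc l \<Rightarrow> complex_of_real R * cinner (e l) y)"
  define p where "p = S0 y + scaleC (cinner (e k) y) w"
  define q where "q = lincomb e (Suc k) coef"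
  have y: "(norm y)\<^sup>2 = (norm y')\<^sup>2 + B + \<beta>\<^sup>2"
    using bessel_eq[OF e, of y] by (simp add: y'_def B_def \<beta>_def)
  have S0_y: "S0 y = S0 y'" unfolding y'_def by (rule bounded_clinear_op_residual[OF S0(1) S0_e, symmetric])
  have u_y: "cinner u y = cinner u y'" unfolding y'_def by (rule cinner_orthogonal_residual[OF u_e, symmetric])
  have "cinner p (e i) = 0" if "i < Suc k" for i
  proof -
    have "cinner (S0 y) (e i) = 0" "cinner w (e i) = 0"
      using e_S0[OF that, of y] e_w[OF that] cinner_eq_zero_sym by blast+
    thus ?thesis by (simp add: p_def cinner_add_left cinner_scaleC_left)
  qed
  hence pq: "cinner p q = 0" unfolding q_def by (rule cinner_lincomb_eq_zero)
  have "norm p \<le> P * norm y' + \<beta> * norm w"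
    using norm_triangle_ineq[of "S0 y" "scaleC (cinner (e k) y) w"] S0(2)[of y']
    by (simp add: p_def S0_y norm_scaleC \<beta>_def)
  also have "\<dots> \<le> P * norm y' + h * \<beta>"
    using mult_right_mono[OF budget(3) norm_ge_zero[of "cinner (e k) y"]] by (simp add: \<beta>_def mult.commute)
  finally have p: "(norm p)\<^sup>2 \<le> (P * norm y' + h * \<beta>)\<^sup>2" by (simp add: power_mono)
  have "cmod (cinner u y') \<le> norm u * norm y'" by (rule cauchy_schwarz)
  hence "c * cmod (cinner u y') \<le> (c * norm u) * norm y'"
    using budget by (simp add: mult.assoc mult_left_mono)
  also have "\<dots> \<le> h * norm y'" using budget by (simp add: mult_right_mono)
  finally have "c * cmod (cinner u y') \<le> h * norm y'" .
  hence "(c * cmod (cinner u y'))\<^sup>2 \<le> (h * norm y')\<^sup>2"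
    using budget by (simp add: power_mono)
  moreover have "(norm q)\<^sup>2 = (c * cmod (cinner u y'))\<^sup>2 + R\<^sup>2 * B"
    unfolding q_def coef_def norm_chain_coefficients_sq[OF e] B_def u_y ..
  ultimately have q: "(norm q)\<^sup>2 \<le> h\<^sup>2 * (norm y')\<^sup>2 + R\<^sup>2 * B" by (simp add: power_mult_distrib)
  have "(norm (chain_extension S0 u c R e k w y))\<^sup>2 = (norm p)\<^sup>2 + (norm q)\<^sup>2"
    unfolding chain_extension_decompose p_def[symmetric] coef_def[symmetric] q_def[symmetric]
    by (rule norm_add_sq_orthogonal[OF pq])
  also have "\<dots> \<le> R\<^sup>2 * ((norm y')\<^sup>2 + B + \<beta>\<^sup>2)"
    using p q chain_budget_inequality[of P h R B "norm y'" \<beta>] budget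
    by (simp add: B_def sum_nonneg)
  also have "\<dots> = (R * norm y)\<^sup>2" by (simp add: y power_mult_distrib)
  finally show ?thesis by (rule power2_le_imp_le) (use budget in simp)
qed

section \<open>The tilted compression\<close>

definition tilted_compression ::
    "('a \<Rightarrow> 'a) \<Rightarrow> real \<Rightarrow> real \<Rightarrow> (nat \<Rightarrow> 'a) \<Rightarrow> (nat \<Rightarrow> 'a) \<Rightarrow> nat \<Rightarrow> 'a \<Rightarrow> 'a::complex_hilbert_space"
  where "tilted_compression T s \<eta> f g m =
    outer_sum f (\<lambda>i. scaleC (complex_of_real s) (T (f i)) + scaleC (complex_of_real \<eta>) (g i)) m"

lemma tilted_compression_eq:
  assumes "bounded_clinear_op T"
  shows "tilted_compression T s \<eta> f g m y
    = scaleC (complex_of_real s) (T (proj f m y)) + scaleC (complex_of_real \<eta>) (outer_sum f g m y)"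
  unfolding tilted_compression_def outer_sum_def bounded_clinear_op_lincomb[OF assms]
  by (simp add: lincomb_def scaleC_add_right scaleC_sum_right scaleC_scaleC sum.distrib mult.commute)

lemma norm_tilted_compression_le:
  assumes T: "bounded_clinear_op T" "\<And>y. norm (T y) \<le> R * norm y"
    and f: "orthonormal f m" and g: "orthonormal g m" and R: "0 \<le> R" and "0 \<le> s" "0 \<le> \<eta>"
  shows "norm (tilted_compression T s \<eta> f g m y) \<le> (s * R + \<eta>) * norm y"
proof -
  have "norm (T (proj f m y)) \<le> R * norm (proj f m y)" by (rule T(2))
  also have "\<dots> \<le> R * norm y" using norm_outer_sum_orthonormal_le[OF f f] R by (rule mult_left_mono)
  finally have "s * norm (T (proj f m y)) \<le> s * (R * norm y)" using assms by (simp add: mult_left_mono)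
  moreover have "\<eta> * norm (outer_sum f g m y) \<le> \<eta> * norm y"
    using norm_outer_sum_orthonormal_le[OF f g] assms by (simp add: mult_left_mono)
  ultimately show ?thesis
    using norm_triangle_ineq[of "scaleC (complex_of_real s) (T (proj f m y))"
        "scaleC (complex_of_real \<eta>) (outer_sum f g m y)"] assms
    by (simp add: tilted_compression_eq[OF T(1)] norm_scaleC algebra_simps)
qed

lemma norm_tilted_compression_diff_le:
  assumes T: "bounded_clinear_op T" and f: "orthonormal f m" and g: "orthonormal g m"
    and v: "proj f m v = v" and "0 \<le> \<eta>"
  shows "norm (tilted_compression T s \<eta> f g m v - scaleC (complex_of_real s) (T v)) \<le> \<eta> * norm v"
  using norm_outer_sum_orthonormal_le[OF f g, of v] assms
  by (simp add: tilted_compression_eq norm_scaleC mult_left_mono)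

text \<open>The tilt is what makes the construction work: without it \<open>x\<close> might lie in the range of
  \<open>s T P\<^sub>f\<close>, and no vector could detect \<open>x\<close> while annihilating that range.\<close>
lemma exists_annihilator_of_tilted_compression:
  assumes T: "bounded_clinear_op T" "\<And>y. norm (T y) \<le> R * norm y"
    and f: "orthonormal f m" and g: "orthonormal g m"
    and g_Tf: "\<And>i l. i < m \<Longrightarrow> l < m \<Longrightarrow> cinner (g i) (T (f l)) = 0"
    and g_x: "\<And>i. i < m \<Longrightarrow> cinner (g i) x = 0" and "x \<noteq> 0" "0 < \<eta>"
  shows "\<exists>u. cinner u x = complex_of_real (norm x) \<and> (norm u)\<^sup>2 \<le> 1 + (s * R / \<eta>)\<^sup>2
    \<and> (\<forall>y. cinner u (tilted_compression T s \<eta> f g m y) = 0)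
    \<and> (\<forall>v. cinner v x = 0 \<longrightarrow> (\<forall>i<m. cinner v (g i) = 0) \<longrightarrow> cinner v u = 0)"
proof -
  define x1 where "x1 = scaleC (complex_of_real (1 / norm x)) x"
  define \<beta> where "\<beta> i = - complex_of_real (s / \<eta>) * cinner (T (f i)) x1" for i
  define u where "u = x1 + lincomb g m \<beta>"
  have x1: "norm x1 = 1" "cinner x1 x = complex_of_real (norm x)"
    using \<open>x \<noteq> 0\<close> by (simp_all add: x1_def norm_scaleC norm_divide cinner_scaleC_left cinner_self_norm
        power2_eq_square)
  have x1_g: "cinner x1 (g i) = 0" if "i < m" for i
  proof -
    have "cinner x (g i) = 0" using g_x[OF that] cinner_eq_zero_sym by blast
    thus ?thesis by (simp add: x1_def cinner_scaleC_left)
  qed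
  have "cinner (lincomb g m \<beta>) x = 0"
    using g_x by (simp add: cinner_lincomb_left)
  hence ux: "cinner u x = complex_of_real (norm x)" by (simp add: u_def cinner_add_left x1)
  have "(\<Sum>i<m. (cmod (\<beta> i))\<^sup>2) = (s / \<eta>)\<^sup>2 * (\<Sum>i<m. (cmod (cinner x1 (T (f i))))\<^sup>2)"
    by (simp add: \<beta>_def norm_mult norm_divide sum_distrib_left power_mult_distrib power_divide
        cmod_cinner_commute)
  also have "\<dots> \<le> (s / \<eta>)\<^sup>2 * (R * norm x1)\<^sup>2"
    by (intro mult_left_mono bessel_adjoint[OF T f]) simp
  finally have "(\<Sum>i<m. (cmod (\<beta> i))\<^sup>2) \<le> (s * R / \<eta>)\<^sup>2"
    using x1 by (simp add: power_mult_distrib power_divide)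
  moreover have "(norm u)\<^sup>2 = 1 + (\<Sum>i<m. (cmod (\<beta> i))\<^sup>2)"
    using norm_add_orthonormal_lincomb_sq[OF g x1_g, of \<beta>] x1 by (simp add: u_def)
  ultimately have nu: "(norm u)\<^sup>2 \<le> 1 + (s * R / \<eta>)\<^sup>2" by simp
  have "cinner u (scaleC (complex_of_real s) (T (f l)) + scaleC (complex_of_real \<eta>) (g l)) = 0"
    if "l < m" for l
  proof -
    have "cinner (lincomb g m \<beta>) (g l) = cnj (\<beta> l)"
      by (subst cinner_commute) (simp add: cinner_orthonormal_lincomb[OF g that])
    moreover have "cinner (lincomb g m \<beta>) (T (f l)) = 0"
      using g_Tf that by (simp add: cinner_lincomb_left)
    ultimately show ?thesis
      using \<open>0 < \<eta>\<close> x1_g[OF that]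
      by (simp add: u_def \<beta>_def cinner_add_left cinner_add_right cinner_scaleC_right
          cinner_commute[of "T (f l)" x1] algebra_simps)
  qed
  hence "cinner u (tilted_compression T s \<eta> f g m y) = 0" for y
    unfolding tilted_compression_def outer_sum_def by (rule cinner_lincomb_eq_zero)
  moreover have "cinner v u = 0" if "cinner v x = 0" "\<forall>i<m. cinner v (g i) = 0" for v
    using that by (simp add: u_def x1_def cinner_add_right cinner_scaleC_right cinner_lincomb_right)
  ultimately show ?thesis using ux nu by blast
qed

lemma exists_tilted_compression:
  fixes T :: "'a::complex_hilbert_space \<Rightarrow> 'a"
  assumes inf: "infinite_dimensional TYPE('a)"
    and T: "bounded_clinear_op T" "\<And>y. norm (T y) \<le> R * norm y"
    and f: "orthonormal f m" and x: "x \<noteq> 0" and "0 \<le> R" "0 \<le> s" "0 < \<eta>"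
  obtains S0 u W where "bounded_clinear_op S0" "finite_rank S0"
    "\<And>y. norm (S0 y) \<le> (s * R + \<eta>) * norm y"
    "\<And>v. proj f m v = v \<Longrightarrow> norm (S0 v - scaleC (complex_of_real s) (T v)) \<le> \<eta> * norm v"
    "\<And>y. cinner u (S0 y) = 0" "cinner u x = complex_of_real (norm x)" "(norm u)\<^sup>2 \<le> 1 + (s * R / \<eta>)\<^sup>2"
    "finite W" "x \<in> W"
    "\<And>v. \<forall>w\<in>W. cinner v w = 0 \<Longrightarrow> S0 v = 0 \<and> (\<forall>y. cinner v (S0 y) = 0) \<and> cinner v u = 0"
proof -
  obtain g where g: "orthonormal g m"
    and g_orth: "\<forall>i<m. \<forall>v\<in>insert x ((\<lambda>l. T (f l)) ` {..<m}). cinner (g i) v = 0"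
    using exists_orthogonal_orthonormal[OF inf, where V = "insert x ((\<lambda>l. T (f l)) ` {..<m})" and k = m]
    by auto
  define S0 where "S0 = tilted_compression T s \<eta> f g m"
  define W where "W = insert x (f ` {..<m} \<union> g ` {..<m} \<union> (\<lambda>l. T (f l)) ` {..<m})"
  have g_Tf: "cinner (g i) (T (f l)) = 0" if "i < m" "l < m" for i l
    using g_orth that by auto
  have g_x: "cinner (g i) x = 0" if "i < m" for i
    using g_orth that by auto
  obtain u where u: "cinner u x = complex_of_real (norm x)" "(norm u)\<^sup>2 \<le> 1 + (s * R / \<eta>)\<^sup>2"
    "\<And>y. cinner u (S0 y) = 0" "\<And>v. cinner v x = 0 \<Longrightarrow> \<forall>i<m. cinner v (g i) = 0 \<Longrightarrow> cinner v u = 0"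
    using exists_annihilator_of_tilted_compression[OF T f g g_Tf g_x x \<open>0 < \<eta>\<close>, of s]
    unfolding S0_def by blast
  have "S0 v = 0 \<and> (\<forall>y. cinner v (S0 y) = 0) \<and> cinner v u = 0" if v: "\<forall>w\<in>W. cinner v w = 0" for v
  proof (intro conjI allI)
    have "cinner (f l) v = 0" if "l < m" for l
    proof -
      have "cinner v (f l) = 0" using v that by (simp add: W_def)
      thus ?thesis using cinner_eq_zero_sym by blast
    qed
    thus "S0 v = 0" by (simp add: S0_def tilted_compression_def outer_sum_def lincomb_def)
    show "cinner v (S0 y) = 0" for y
      unfolding S0_def tilted_compression_def outer_sum_def using v
      by (intro cinner_lincomb_eq_zero) (auto simp: W_def cinner_add_right cinner_scaleC_right)
    show "cinner v u = 0" using v u(4) by (simp add: W_def)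
  qed
  moreover have "bounded_clinear_op S0" "finite_rank S0"
    unfolding S0_def tilted_compression_def
    by (simp_all add: bounded_clinear_op_outer_sum finite_rank_outer_sum)
  moreover have "norm (S0 y) \<le> (s * R + \<eta>) * norm y" for y
    unfolding S0_def using assms by (intro norm_tilted_compression_le[OF T f g]) simp_all
  moreover have "norm (S0 v - scaleC (complex_of_real s) (T v)) \<le> \<eta> * norm v" if "proj f m v = v" for v
    unfolding S0_def using assms that by (intro norm_tilted_compression_diff_le[OF T(1) f g]) simp_all
  moreover have "finite W" "x \<in> W" by (simp_all add: W_def)
  ultimately show ?thesis using that[of S0 u W] u by blast
qed

lemma exists_chain_extension_hitting:
  fixes S0 :: "'a::complex_hilbert_space \<Rightarrow> 'a"
  assumes inf: "infinite_dimensional TYPE('a)"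
    and S0: "bounded_clinear_op S0" "finite_rank S0" "\<And>y. norm (S0 y) \<le> P * norm y"
    and W: "finite W" "x \<in> W"
      "\<And>v. \<forall>w\<in>W. cinner v w = 0 \<Longrightarrow> S0 v = 0 \<and> (\<forall>y. cinner v (S0 y) = 0) \<and> cinner v u = 0"
    and u: "\<And>y. cinner u (S0 y) = 0" "cinner u x = complex_of_real (norm x)"
    and budget: "x \<noteq> 0" "0 < c" "c * norm u \<le> h" "0 \<le> P" "0 \<le> h" "P\<^sup>2 + P * h + h\<^sup>2 \<le> R\<^sup>2" "0 < R"
    and k: "norm z + P ^ Suc (Suc k) * norm x \<le> h * c * norm x * R ^ k"
    and V: "finite V"
  obtains S where "bounded_clinear_op S" "finite_rank S" "\<And>y. norm (S y) \<le> R * norm y"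
    "(S ^^ Suc (Suc k)) x = z" "\<And>v. v \<in> V \<Longrightarrow> norm (S v - S0 v) \<le> c * norm u * norm v"
proof -
  obtain e where e: "orthonormal e (Suc k)"
    and e_orth: "\<forall>i<Suc k. \<forall>v\<in>insert z (W \<union> V). cinner (e i) v = 0"
    using exists_orthogonal_orthonormal[OF inf, of "insert z (W \<union> V)" "Suc k"] W V by auto
  have e_W: "S0 (e i) = 0 \<and> (\<forall>y. cinner (e i) (S0 y) = 0) \<and> cinner (e i) u = 0" if "i < Suc k" for i
    using W(3) e_orth that by blast
  have u_e: "cinner u (e i) = 0" if "i < Suc k" for i
    using e_W[OF that] cinner_eq_zero_sym by blast
  define K where "K = c * norm x * R ^ k"
  have K: "0 < K" using budget by (simp add: K_def)
  define w where "w = scaleC (complex_of_real (1 / K)) (z - (S0 ^^ Suc (Suc k)) x)"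
  have "norm (z - (S0 ^^ Suc (Suc k)) x) \<le> norm z + P ^ Suc (Suc k) * norm x"
    using norm_triangle_ineq4[of z "(S0 ^^ Suc (Suc k)) x"]
      norm_funpow_le[OF S0(3) budget(4), of "Suc (Suc k)" x] by linarith
  also have "\<dots> \<le> h * K" using k by (simp add: K_def mult_ac)
  finally have "norm (z - (S0 ^^ Suc (Suc k)) x) / K \<le> h" using K by (simp add: pos_divide_le_eq)
  hence w: "norm w \<le> h" using K by (simp add: w_def norm_scaleC norm_divide)
  have e_w: "cinner (e i) w = 0" if "i < Suc k" for i
    using e_W[OF that] e_orth that by (simp add: w_def cinner_scaleC_right cinner_diff_right)
  define S where "S = chain_extension S0 u c R e k w"
  have "(S ^^ Suc (Suc k)) x = (S0 ^^ Suc (Suc k)) x + scaleC (complex_of_real K) w"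
    unfolding S_def using chain_extension_orbit[OF e S0(1), of u x c R w] e_W u u_e e_orth W(2)
    by (simp add: K_def u(2) mult_ac)
  also have "\<dots> = z" using K by (simp add: w_def scaleC_scaleC scaleC_one)
  finally have orbit: "(S ^^ Suc (Suc k)) x = z" .
  have "norm (S v - S0 v) \<le> c * norm u * norm v" if "v \<in> V" for v
    unfolding S_def using e_orth that less_imp_le[OF budget(2)]
    by (intro norm_chain_extension_diff_le[OF e]) simp_all
  moreover have "norm (S y) \<le> R * norm y" for y
    unfolding S_def using norm_chain_extension_le[OF e S0(1,3), of u w c h R y] e_W u_e e_w w budget
    by simp
  moreover have "bounded_clinear_op S" "finite_rank S"
    unfolding S_def using S0 by (simp_all add: bounded_clinear_op_chain_extension finite_rank_chain_extension)
  ultimately show ?thesis using that orbit by blast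
qed

section \<open>The approximating operator\<close>

text \<open>\<open>\<delta>\<close> is the relative shrinking of \<open>T\<close>, \<open>h\<close> the norm allotted to each small piece, \<open>c\<close> the
  weight with which \<open>x\<close> enters the chain; the chain must be long enough for \<open>R\<^sup>k\<close> to beat the
  decay \<open>((1 - \<delta>/2) R)\<^sup>k\<close> of the compression.\<close>
definition orbit_length :: "real \<Rightarrow> real \<Rightarrow> real \<Rightarrow> real \<Rightarrow> nat" where
  "orbit_length R \<epsilon> a b =
    (let \<delta> = min (1/2) (\<epsilon> / (4 * R)); h = \<delta> * R / 4;
         c = \<delta> * R / 4 / sqrt (1 + 4 / \<delta>\<^sup>2)
     in Suc (Suc (LEAST k. b + ((1 - \<delta> / 2) * R) ^ Suc (Suc k) * a \<le> h * c * a * R ^ k)))"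

lemma compression_budget:
  fixes \<delta> R :: real
  assumes "0 \<le> \<delta>" "\<delta> \<le> 4"
  shows "((1 - \<delta> / 2) * R)\<^sup>2 + (1 - \<delta> / 2) * R * (\<delta> * R / 4) + (\<delta> * R / 4)\<^sup>2 \<le> R\<^sup>2"
proof -
  have "((1 - \<delta> / 2) * R)\<^sup>2 + (1 - \<delta> / 2) * R * (\<delta> * R / 4) + (\<delta> * R / 4)\<^sup>2
      = R\<^sup>2 * (1 - 3 * \<delta> / 4 + 3 * \<delta>\<^sup>2 / 16)"
    by (simp add: power2_eq_square algebra_simps)
  also have "\<dots> \<le> R\<^sup>2 * 1"
  proof (rule mult_left_mono)
    have "\<delta>\<^sup>2 \<le> 4 * \<delta>" using mult_right_mono[OF assms(2,1)] by (simp add: power2_eq_square)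
    thus "1 - 3 * \<delta> / 4 + 3 * \<delta>\<^sup>2 / 16 \<le> 1" by simp
  qed simp
  finally show ?thesis by simp
qed

lemma exists_finite_rank_approximation_with_chain:
  fixes T :: "'a::complex_hilbert_space \<Rightarrow> 'a" and xs :: "nat \<Rightarrow> 'a"
  assumes inf: "infinite_dimensional TYPE('a)" and xs: "\<forall>j\<in>{1..n}. norm (xs j) = 1"
    and R: "1 < R" and T: "bounded_clinear_op T" "onorm T \<le> R" and x: "x \<noteq> 0"
    and \<delta>: "0 < \<delta>" "\<delta> \<le> 1/2"
  defines "h \<equiv> \<delta> * R / 4" and "c \<equiv> \<delta> * R / 4 / sqrt (1 + 4 / \<delta>\<^sup>2)" and "P \<equiv> (1 - \<delta> / 2) * R"
  assumes k: "norm z + P ^ Suc (Suc k) * norm x \<le> h * c * norm x * R ^ k"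
  shows "\<exists>S. bounded_clinear_op S \<and> finite_rank S \<and> onorm S \<le> R
    \<and> (\<forall>j\<in>{1..n}. norm (S (xs j) - T (xs j)) \<le> h + \<delta> * R / 2 + \<delta> * R)
    \<and> (S ^^ Suc (Suc k)) x = z"
proof -
  have U: "0 < sqrt (1 + 4 / \<delta>\<^sup>2)" by (simp add: add_pos_nonneg)
  hence h: "0 < h" "0 < c" using \<delta> R by (simp_all add: h_def c_def)
  have TR: "\<And>y. norm (T y) \<le> R * norm y" by (rule bounded_clinear_op_norm_le[OF T])
  obtain f m where f: "orthonormal f m" and f_xs: "\<forall>v\<in>xs ` {1..n}. proj f m v = v"
    using gram_schmidt[of "xs ` {1..n}"] by auto
  have R0: "0 \<le> R" and s0: "0 \<le> 1 - \<delta>" and \<eta>0: "0 < \<delta> * R / 2" using \<delta> R by simp_all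
  obtain S0 u W where S0: "bounded_clinear_op S0" "finite_rank S0"
      "\<And>y. norm (S0 y) \<le> ((1 - \<delta>) * R + \<delta> * R / 2) * norm y"
      "\<And>v. proj f m v = v \<Longrightarrow> norm (S0 v - scaleC (complex_of_real (1 - \<delta>)) (T v)) \<le> \<delta> * R / 2 * norm v"
    and u: "\<And>y. cinner u (S0 y) = 0" "cinner u x = complex_of_real (norm x)"
      "(norm u)\<^sup>2 \<le> 1 + ((1 - \<delta>) * R / (\<delta> * R / 2))\<^sup>2"
    and W: "finite W" "x \<in> W"
      "\<And>v. \<forall>w\<in>W. cinner v w = 0 \<Longrightarrow> S0 v = 0 \<and> (\<forall>y. cinner v (S0 y) = 0) \<and> cinner v u = 0"
    using exists_tilted_compression[OF inf T(1) TR f x R0 s0 \<eta>0] by blast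
  have S0_P: "norm (S0 y) \<le> P * norm y" for y
    using S0(3)[of y] by (simp add: P_def algebra_simps)
  have "((1 - \<delta>) * R / (\<delta> * R / 2))\<^sup>2 \<le> 4 / \<delta>\<^sup>2"
    using \<delta> R by (simp add: power_divide field_simps power2_eq_square mult_right_mono)
  hence "norm u \<le> sqrt (1 + 4 / \<delta>\<^sup>2)" using u(3) by (simp add: real_le_rsqrt)
  hence "c * norm u \<le> c * sqrt (1 + 4 / \<delta>\<^sup>2)" using less_imp_le[OF h(2)] by (rule mult_left_mono)
  also have "\<dots> = h" using U by (simp add: c_def h_def)
  finally have cu: "c * norm u \<le> h" .
  have budget: "P\<^sup>2 + P * h + h\<^sup>2 \<le> R\<^sup>2"
    unfolding P_def h_def using \<delta> by (intro compression_budget) simp_all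
  obtain S where S: "bounded_clinear_op S" "finite_rank S" "\<And>y. norm (S y) \<le> R * norm y"
      "(S ^^ Suc (Suc k)) x = z" "\<And>v. v \<in> xs ` {1..n} \<Longrightarrow> norm (S v - S0 v) \<le> c * norm u * norm v"
    using exists_chain_extension_hitting[OF inf S0(1,2) S0_P W u(1,2) x h(2) cu _ _ budget _ k,
        of "xs ` {1..n}"] \<delta> R h(1)
    by (auto simp: P_def)
  have "norm (S (xs j) - T (xs j)) \<le> h + \<delta> * R / 2 + \<delta> * R" if j: "j \<in> {1..n}" for j
  proof -
    let ?v = "xs j"
    have v: "norm ?v = 1" "proj f m ?v = ?v" using xs f_xs j by simp_all
    have "norm (S ?v - T ?v)
        \<le> norm (S ?v - S0 ?v) + norm (S0 ?v - scaleC (complex_of_real (1 - \<delta>)) (T ?v)) + \<delta> * norm (T ?v)"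
      using \<delta> by (intro norm_diff_le_shrunk) simp
    also have "\<dots> \<le> h + \<delta> * R / 2 + \<delta> * R"
      using S(5)[of ?v] S0(4)[of ?v] TR[of ?v] j cu v \<delta> by (intro add_mono) simp_all
    finally show ?thesis .
  qed
  moreover have "onorm S \<le> R" using S(3) R by (intro onorm_bound) auto
  ultimately show ?thesis using S by auto
qed

lemma exists_finite_rank_approximation_with_orbit:
  fixes T :: "'a::complex_hilbert_space \<Rightarrow> 'a" and xs :: "nat \<Rightarrow> 'a"
  assumes inf: "infinite_dimensional TYPE('a)" and xs: "\<forall>j\<in>{1..n}. norm (xs j) = 1"
    and R: "1 < R" and T: "bounded_clinear_op T" "onorm T \<le> R" and x: "x \<noteq> 0" and \<epsilon>: "0 < \<epsilon>"
  shows "\<exists>S. bounded_clinear_op S \<and> finite_rank S \<and> onorm S \<le> R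
    \<and> (\<forall>j\<in>{1..n}. norm (S (xs j) - T (xs j)) < \<epsilon>)
    \<and> (S ^^ orbit_length R \<epsilon> (norm x) (norm z)) x = z"
proof -
  define \<delta> where "\<delta> = min (1/2) (\<epsilon> / (4 * R))"
  define h where "h = \<delta> * R / 4"
  define c where "c = \<delta> * R / 4 / sqrt (1 + 4 / \<delta>\<^sup>2)"
  define P where "P = (1 - \<delta> / 2) * R"
  define k where "k = (LEAST k. norm z + P ^ Suc (Suc k) * norm x \<le> h * c * norm x * R ^ k)"
  have "\<delta> * R \<le> \<epsilon> / (4 * R) * R" using R by (intro mult_right_mono) (simp_all add: \<delta>_def)
  hence \<delta>: "0 < \<delta>" "\<delta> \<le> 1/2" "\<delta> * R \<le> \<epsilon> / 4" using R \<epsilon> by (simp_all add: \<delta>_def)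
  have "0 < h * c * norm x" using \<delta> R x by (simp add: h_def c_def add_pos_nonneg)
  moreover have "0 \<le> P" "P < R" using \<delta> R by (simp_all add: P_def)
  ultimately have "\<exists>k. norm z + P ^ Suc (Suc k) * norm x \<le> h * c * norm x * R ^ k"
    using exists_power_le R by blast
  hence "norm z + P ^ Suc (Suc k) * norm x \<le> h * c * norm x * R ^ k"
    unfolding k_def by (rule LeastI_ex)
  then obtain S where "bounded_clinear_op S" "finite_rank S" "onorm S \<le> R" "(S ^^ Suc (Suc k)) x = z"
    and S_xs: "\<forall>j\<in>{1..n}. norm (S (xs j) - T (xs j)) \<le> h + \<delta> * R / 2 + \<delta> * R"
    using exists_finite_rank_approximation_with_chain[OF inf xs R T x \<delta>(1,2)]
    unfolding h_def c_def P_def by blast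
  moreover have "h + \<delta> * R / 2 + \<delta> * R < \<epsilon>" unfolding h_def using \<delta>(3) \<epsilon> by linarith
  moreover have "orbit_length R \<epsilon> (norm x) (norm z) = Suc (Suc k)"
    by (simp add: orbit_length_def Let_def k_def P_def c_def h_def \<delta>_def)
  ultimately show ?thesis by fastforce
qed

theorem lemma6:
  assumes "separable_space TYPE('a::complex_hilbert_space)"
    and "infinite_dimensional TYPE('a)"
  shows "\<exists>N :: real \<Rightarrow> real \<Rightarrow> real \<Rightarrow> real \<Rightarrow> nat.
    \<forall>(n::nat) (xs::nat \<Rightarrow> 'a) (R::real) (T::'a \<Rightarrow> 'a) (x::'a) (z::'a) (\<epsilon>::real).
      (\<forall>j\<in>{1..n}. norm (xs j) = 1) \<and> R > 1 \<and> bounded_clinear_op T \<and> onorm T \<le> R \<and>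
      x \<noteq> 0 \<and> \<epsilon> > 0 \<longrightarrow>
      (\<exists>S::'a \<Rightarrow> 'a. bounded_clinear_op S \<and> finite_rank S \<and> onorm S \<le> R \<and>
         (\<forall>j\<in>{1..n}. norm (S (xs j) - T (xs j)) < \<epsilon>) \<and>
         (S ^^ N R \<epsilon> (norm x) (norm z)) x = z)"
  using exists_finite_rank_approximation_with_orbit[OF assms(2)]
  by (intro exI[of _ orbit_length] allI impI) blast

end
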